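(* Let $\mathcal X$ be a Banach space, $a>0$, and let $(r_l)_{l\ge0},(r'_l)_{l\ge0}\subset[0,1)$ be sequences with $1-r_l\approx2^{-l}$, $1-r'_l\approx2^{-l}$ and $$(r'_l-r_l)\approx\Big(1-\frac{r_l}{r'_l}\Big)\approx(1-r_l)\approx2^{-l},\qquad l\ge0$$ (where $A_l\approx B_l$ means $c B_l\le A_l\le CB_l$ with constants independent of $l$). Then there is a constant $K$ such that $$f^*_{r_l,a}(\zeta_x)\le K\,f^*_{r'_l,a}(\zeta_x)$$ for all $f\in\mathcal A(\mathcal X)$, $l\ge0$ and $\zeta_x\in\mathbb T$.
   Context: $\mathbb D$ unit disc, $\mathbb T$ unit circle, $\zeta_x=e^{2\pi ix}$; $|\zeta_x-\zeta_y|$ arc-length distance (distance from $x-y$ to $\mathbb Z$). $\mathcal A(\mathcal X)$: analytic $f:\mathbb D\to\mathcal X$; $f_r(\zeta)=f(r\zeta)$. Peetre maximal function: $f^*_{r,a}(\zeta_x)=\sup_{\zeta_y\in\mathbb T}\|f_r(\zeta_y)\|_{\mathcal X}\big(1+\frac{|\zeta_x-\zeta_y|}{1-r}\big)^{-a}$ for $r\in[0,1)$. *)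

theory Defs
  imports "HOL-Analysis.Analysis"
begin

class complex_banach = banach +
  fixes scaleC :: "complex \<Rightarrow> 'a \<Rightarrow> 'a"
  assumes scaleC_add_right: "scaleC c (x + y) = scaleC c x + scaleC c y"
    and scaleC_add_left: "scaleC (b + c) x = scaleC b x + scaleC c x"
    and scaleC_scaleC: "scaleC b (scaleC c x) = scaleC (b * c) x"
    and scaleC_one: "scaleC 1 x = x"
    and scaleC_of_real: "scaleC (complex_of_real t) x = t *\<^sub>R x"
    and norm_scaleC: "norm (scaleC c x) = cmod c * norm x"

text \<open>f is analytic on the unit disc: complex differentiable at every point of the disc
(for Banach-space-valued functions this is equivalent to analyticity).\<close>
definition analytic_disc :: "(complex \<Rightarrow> 'a::complex_banach) \<Rightarrow> bool" where
  "analytic_disc f \<longleftrightarrow>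
     (\<forall>z \<in> ball 0 1. \<exists>v. ((\<lambda>w. scaleC (inverse (w - z)) (f w - f z)) \<longlongrightarrow> v) (at z))"

definition zeta :: "real \<Rightarrow> complex" where
  "zeta x = cis (2 * pi * x)"

text \<open>arc distance |zeta_x - zeta_y| := distance from x - y to the integers\<close>
definition circdist :: "real \<Rightarrow> real \<Rightarrow> real" where
  "circdist x y = (INF k\<in>(\<int>::real set). \<bar>x - y - k\<bar>)"

text \<open>Peetre maximal function f*_{r,a}(zeta_x); the supremum over zeta_y in T
is taken over y in [0,1).\<close>
definition peetre :: "(complex \<Rightarrow> 'a::complex_banach) \<Rightarrow> real \<Rightarrow> real \<Rightarrow> real \<Rightarrow> real" where
  "peetre f r a x =
     (SUP y\<in>{0..<1}. norm (f (complex_of_real r * zeta y)) * (1 + circdist x y / (1 - r)) powr (- a))"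

end

theory Submission
  imports Defs "HOL-Complex_Analysis.Complex_Analysis"
begin

text \<open>
  Fix \<open>r \<le> R < 1\<close>, a point \<open>p = r \<zeta>\<^sub>y\<close> and a norming functional \<open>\<phi>\<close> for \<open>f p\<close> (Hahn-Banach).
  The scalar function \<open>(\<phi> \<circ> f)(z) (1 - \<zeta>\<^sub>x\<^sup>* z)\<^sup>-\<^sup>a\<close> is holomorphic on the disc; on the circle
  \<open>|z| = R\<close> the factor \<open>|1 - \<zeta>\<^sub>x\<^sup>* z|\<close> is comparable to \<open>(1 - R)(1 + |\<zeta>\<^sub>x - \<zeta>\<^sub>t|/(1 - R))\<close>, so
  there the product is bounded by \<open>(3/(1 - R))\<^sup>a f\<^sup>*\<^sub>R\<^sub>,\<^sub>a(\<zeta>\<^sub>x)\<close>. The maximum modulus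
  principle carries this bound to \<open>p\<close>, where \<open>|1 - \<zeta>\<^sub>x\<^sup>* p| \<le> 2\<pi>(1 - r)(1 + |\<zeta>\<^sub>x - \<zeta>\<^sub>y|/(1 - r))\<close>.
  Hence \<open>f\<^sup>*\<^sub>r\<^sub>,\<^sub>a \<le> (6\<pi>(1 - r)/(1 - R))\<^sup>a f\<^sup>*\<^sub>R\<^sub>,\<^sub>a\<close>, and under the hypotheses the ratio
  \<open>(1 - r\<^sub>l)/(1 - r'\<^sub>l)\<close> is bounded and \<open>r\<^sub>l \<le> r'\<^sub>l\<close>.
\<close>

section \<open>Hahn-Banach theorem for norming functionals\<close>

text \<open>Linear functionals on subspaces, dominated by the norm and norming \<open>v\<close>, are encoded by
  their graphs, so that Zorn's lemma applies to the subset order; such a graph is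
  single-valued by \<open>norming_graph_unique\<close>.\<close>

definition norming_graph :: "'a::real_normed_vector \<Rightarrow> ('a \<times> real) set \<Rightarrow> bool" where
  "norming_graph v G \<longleftrightarrow>
     (\<forall>x a y b. (x, a) \<in> G \<longrightarrow> (y, b) \<in> G \<longrightarrow> (x + y, a + b) \<in> G)
     \<and> (\<forall>x a c. (x, a) \<in> G \<longrightarrow> (c *\<^sub>R x, c * a) \<in> G)
     \<and> (\<forall>x a. (x, a) \<in> G \<longrightarrow> a \<le> norm x)
     \<and> (v, norm v) \<in> G"

lemma norming_graph_add: "norming_graph v G \<Longrightarrow> (x, a) \<in> G \<Longrightarrow> (y, b) \<in> G \<Longrightarrow> (x + y, a + b) \<in> G"
  and norming_graph_scale: "norming_graph v G \<Longrightarrow> (x, a) \<in> G \<Longrightarrow> (c *\<^sub>R x, c * a) \<in> G"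
  and norming_graph_le_norm: "norming_graph v G \<Longrightarrow> (x, a) \<in> G \<Longrightarrow> a \<le> norm x"
  and norming_graph_norming: "norming_graph v G \<Longrightarrow> (v, norm v) \<in> G"
  unfolding norming_graph_def by blast+

lemma norming_graph_unique:
  assumes "norming_graph v G" "(x, a) \<in> G" "(x, b) \<in> G"
  shows "a = b"
proof -
  have "(x + (-1) *\<^sub>R x, a + (-1) * b) \<in> G" "(x + (-1) *\<^sub>R x, b + (-1) * a) \<in> G"
    using assms by (blast intro: norming_graph_add norming_graph_scale)+
  then have "a - b \<le> 0" "b - a \<le> 0"
    using norming_graph_le_norm[OF assms(1)] by fastforce+
  then show ?thesis by simp
qed

lemma norming_graph_zero: "norming_graph v G \<Longrightarrow> (0, 0) \<in> G"
  using norming_graph_scale[of v G v "norm v" 0] norming_graph_norming[of v G] by simp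

text \<open>One-dimensional extension: a new direction \<open>w\<close> may receive any value \<open>t\<close> between
  these two bounds.\<close>

lemma norming_graph_extension_le_norm:
  assumes G: "norming_graph v G"
    and lower: "\<And>x a. (x, a) \<in> G \<Longrightarrow> a - norm (x - w) \<le> t"
    and upper: "\<And>y b. (y, b) \<in> G \<Longrightarrow> t \<le> norm (y + w) - b"
    and yb: "(y, b) \<in> G"
  shows "b + c * t \<le> norm (y + c *\<^sub>R w)"
proof (cases c "0::real" rule: linorder_cases)
  case equal
  then show ?thesis using norming_graph_le_norm[OF G yb] by simp
next
  case greater
  have "((1/c) *\<^sub>R y, (1/c) * b) \<in> G" using G yb by (rule norming_graph_scale)
  from mult_left_mono[OF upper[OF this], of c] greater
  have "c * t \<le> norm (c *\<^sub>R ((1/c) *\<^sub>R y + w)) - b"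
    by (simp add: right_diff_distrib)
  also have "c *\<^sub>R ((1/c) *\<^sub>R y + w) = y + c *\<^sub>R w"
    using greater by (simp add: scaleR_add_right)
  finally show ?thesis by simp
next
  case less
  have "((-1/c) *\<^sub>R y, (-1/c) * b) \<in> G" using G yb by (rule norming_graph_scale)
  from mult_left_mono[OF lower[OF this], of "-c"] less
  have "b - norm ((-c) *\<^sub>R ((-1/c) *\<^sub>R y - w)) \<le> -c * t"
    by (simp add: right_diff_distrib)
  also have "(-c) *\<^sub>R ((-1/c) *\<^sub>R y - w) = y + c *\<^sub>R w"
    using less by (simp add: scaleR_diff_right)
  finally show ?thesis by simp
qed

lemma norming_graph_extension_value:
  assumes G: "norming_graph v G"
  obtains t where "\<And>x a. (x, a) \<in> G \<Longrightarrow> a - norm (x - w) \<le> t"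
    and "\<And>y b. (y, b) \<in> G \<Longrightarrow> t \<le> norm (y + w) - b"
proof -
  define S where "S = (\<lambda>(x, a). a - norm (x - w)) ` G"
  have S_le: "s \<le> norm (y + w) - b" if "s \<in> S" "(y, b) \<in> G" for s y b
  proof -
    obtain x a where xa: "(x, a) \<in> G" "s = a - norm (x - w)"
      using \<open>s \<in> S\<close> unfolding S_def by auto
    have "a + b \<le> norm ((x - w) + (y + w))"
      using norming_graph_le_norm[OF G norming_graph_add[OF G xa(1) that(2)]] by simp
    also have "\<dots> \<le> norm (x - w) + norm (y + w)" by (rule norm_triangle_ineq)
    finally show ?thesis using xa by simp
  qed
  have zero: "(0, 0) \<in> G" using G by (rule norming_graph_zero)
  have "S \<noteq> {}" using zero unfolding S_def by auto
  moreover have "bdd_above S" using S_le[OF _ zero] by (auto intro!: bdd_aboveI)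
  ultimately show ?thesis
    by (intro that[of "Sup S"] cSup_upper cSup_least S_le) (force simp: S_def)+
qed

lemma norming_graph_extension:
  assumes G: "norming_graph v G"
    and lower: "\<And>x a. (x, a) \<in> G \<Longrightarrow> a - norm (x - w) \<le> t"
    and upper: "\<And>y b. (y, b) \<in> G \<Longrightarrow> t \<le> norm (y + w) - b"
  shows "norming_graph v {(x + c *\<^sub>R w, a + c * t) | x a c. (x, a) \<in> G}"
    (is "norming_graph v ?G'")
  unfolding norming_graph_def
proof (intro conjI allI impI)
  fix x1 a1 x2 a2 assume "(x1, a1) \<in> ?G'" "(x2, a2) \<in> ?G'"
  then obtain y1 b1 c1 y2 b2 c2 where "(y1, b1) \<in> G" "(y2, b2) \<in> G"
    and "x1 + x2 = (y1 + y2) + (c1 + c2) *\<^sub>R w" "a1 + a2 = (b1 + b2) + (c1 + c2) * t"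
    by (auto simp: algebra_simps)
  then show "(x1 + x2, a1 + a2) \<in> ?G'"
    using norming_graph_add[OF G] by blast
next
  fix x1 a1 c assume "(x1, a1) \<in> ?G'"
  then obtain y1 b1 c1 where "(y1, b1) \<in> G" "x1 = y1 + c1 *\<^sub>R w" "a1 = b1 + c1 * t"
    by blast
  moreover from this have "c *\<^sub>R x1 = c *\<^sub>R y1 + (c * c1) *\<^sub>R w" "c * a1 = c * b1 + (c * c1) * t"
    by (simp_all add: algebra_simps)
  ultimately show "(c *\<^sub>R x1, c * a1) \<in> ?G'"
    using norming_graph_scale[OF G] by blast
next
  fix x1 a1 assume "(x1, a1) \<in> ?G'"
  then show "a1 \<le> norm x1"
    using norming_graph_extension_le_norm[OF G lower upper] by blast
next
  have "(v + 0 *\<^sub>R w, norm v + 0 * t) \<in> ?G'"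
    using norming_graph_norming[OF G] by blast
  then show "(v, norm v) \<in> ?G'" by simp
qed

lemma norming_graph_extend:
  assumes G: "norming_graph v G" and w: "\<forall>a. (w, a) \<notin> G"
  shows "\<exists>G'. norming_graph v G' \<and> G \<subset> G'"
proof -
  obtain t where lower: "\<And>x a. (x, a) \<in> G \<Longrightarrow> a - norm (x - w) \<le> t"
    and upper: "\<And>y b. (y, b) \<in> G \<Longrightarrow> t \<le> norm (y + w) - b"
    using norming_graph_extension_value[OF G] by blast
  define G' where "G' = {(x + c *\<^sub>R w, a + c * t) | x a c. (x, a) \<in> G}"
  have "G \<subseteq> G'"
  proof
    fix p assume "p \<in> G"
    moreover obtain x a where "p = (x, a)" by fastforce
    moreover have "(x + 0 *\<^sub>R w, a + 0 * t) \<in> G'" if "(x, a) \<in> G"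
      unfolding G'_def using that by blast
    ultimately show "p \<in> G'" by simp
  qed
  moreover have "(0 + 1 *\<^sub>R w, 0 + 1 * t) \<in> G'"
    unfolding G'_def using norming_graph_zero[OF G] by blast
  then have "(w, t) \<in> G' - G" using w by simp
  ultimately show ?thesis
    using norming_graph_extension[OF G lower upper, folded G'_def] by blast
qed

lemma norming_graph_Union_chain:
  assumes "C \<in> chains {G. norming_graph v G}" "C \<noteq> {}"
  shows "norming_graph v (\<Union>C)"
proof -
  have good: "\<And>G. G \<in> C \<Longrightarrow> norming_graph v G"
    and chain: "\<And>G H. G \<in> C \<Longrightarrow> H \<in> C \<Longrightarrow> G \<subseteq> H \<or> H \<subseteq> G"
    using assms(1) unfolding chains_def chain_subset_def by auto
  show ?thesis
    unfolding norming_graph_def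
  proof (intro conjI allI impI)
    fix x a y b assume "(x, a) \<in> \<Union>C" "(y, b) \<in> \<Union>C"
    then obtain G where "G \<in> C" "(x, a) \<in> G" "(y, b) \<in> G"
      using chain by blast
    then show "(x + y, a + b) \<in> \<Union>C" using good norming_graph_add by blast
  next
    fix x a c assume "(x, a) \<in> \<Union>C"
    then obtain G where "G \<in> C" "(x, a) \<in> G" by blast
    then show "(c *\<^sub>R x, c * a) \<in> \<Union>C" using good norming_graph_scale by blast
  next
    fix x a assume "(x, a) \<in> \<Union>C"
    then obtain G where "G \<in> C" "(x, a) \<in> G" by blast
    then show "a \<le> norm x" using good norming_graph_le_norm by blast
  next
    obtain G where "G \<in> C" using assms(2) by blast
    then show "(v, norm v) \<in> \<Union>C" using good norming_graph_norming by blast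
  qed
qed

lemma norming_graph_line: "norming_graph v (range (\<lambda>c. (c *\<^sub>R v, c * norm v)))"
  (is "norming_graph v ?L")
  unfolding norming_graph_def
proof (intro conjI allI impI)
  fix x a y b assume "(x, a) \<in> ?L" "(y, b) \<in> ?L"
  then obtain c d where "x = c *\<^sub>R v" "a = c * norm v" "y = d *\<^sub>R v" "b = d * norm v" by auto
  then show "(x + y, a + b) \<in> ?L"
    using rangeI[of "\<lambda>c. (c *\<^sub>R v, c * norm v)" "c + d"] by (simp add: scaleR_add_left distrib_right)
next
  fix x a e assume "(x, a) \<in> ?L"
  then obtain c where "x = c *\<^sub>R v" "a = c * norm v" by auto
  then show "(e *\<^sub>R x, e * a) \<in> ?L"
    using rangeI[of "\<lambda>c. (c *\<^sub>R v, c * norm v)" "e * c"] by (simp add: mult.assoc)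
next
  show "(v, norm v) \<in> ?L"
    using rangeI[of "\<lambda>c. (c *\<^sub>R v, c * norm v)" 1] by simp
qed (auto simp: mult_right_mono)

lemma real_norming_functional:
  fixes v :: "'a::real_normed_vector"
  obtains g :: "'a \<Rightarrow> real" where "linear g" "\<And>x. g x \<le> norm x" "g v = norm v"
proof -
  define A where "A = {G. norming_graph v (G :: ('a \<times> real) set)}"
  have "\<exists>U\<in>A. \<forall>X\<in>C. X \<subseteq> U" if C: "C \<in> chains A" for C
  proof (cases "C = {}")
    case True
    then show ?thesis using norming_graph_line unfolding A_def by blast
  next
    case False
    then have "\<Union>C \<in> A" using norming_graph_Union_chain C unfolding A_def by blast
    then show ?thesis by blast
  qed
  from Zorn_Lemma2[OF ballI[OF this]] obtain G where "G \<in> A" and "\<forall>H\<in>A. G \<subseteq> H \<longrightarrow> H = G"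
    by blast
  then have G: "norming_graph v G" and maximal: "\<And>H. norming_graph v H \<Longrightarrow> G \<subseteq> H \<Longrightarrow> H = G"
    unfolding A_def by auto
  have "\<exists>a. (w, a) \<in> G" for w
  proof (rule ccontr)
    assume "\<nexists>a. (w, a) \<in> G"
    then obtain H where "norming_graph v H" "G \<subset> H"
      using norming_graph_extend[OF G] by blast
    with maximal show False by blast
  qed
  then obtain g where g: "\<And>w. (w, g w) \<in> G" by metis
  have "linear g"
  proof (rule linearI)
    show "g (x + y) = g x + g y" for x y
      using norming_graph_unique[OF G g norming_graph_add[OF G g g]] .
    show "g (c *\<^sub>R x) = c *\<^sub>R g x" for c x
      using norming_graph_unique[OF G g norming_graph_scale[OF G g]] by simp
  qed
  moreover have "g v = norm v"
    using norming_graph_unique[OF G g norming_graph_norming[OF G]] .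
  ultimately show ?thesis
    using that norming_graph_le_norm[OF G g] by blast
qed

lemma scaleC_scaleR: "scaleC c (r *\<^sub>R x) = r *\<^sub>R scaleC c (x::'a::complex_banach)"
  by (metis scaleC_of_real scaleC_scaleC mult.commute)

lemma scaleC_ii: "scaleC \<i> (scaleC \<i> x) = - (x::'a::complex_banach)"
  using scaleC_of_real[of "-1" x] by (simp add: scaleC_scaleC)

lemma complex_norming_functional:
  fixes v :: "'a::complex_banach"
  obtains \<phi> :: "'a \<Rightarrow> complex"
  where "bounded_linear \<phi>" "\<And>c x. \<phi> (scaleC c x) = c * \<phi> x"
    and "\<And>x. cmod (\<phi> x) \<le> norm x" "\<phi> v = complex_of_real (norm v)"
proof -
  obtain g where g: "linear g" and g_le: "\<And>x. g x \<le> norm x" and g_v: "g v = norm v"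
    using real_norming_functional by blast
  define \<phi> where "\<phi> x = Complex (g x) (- g (scaleC \<i> x))" for x
  have Re_\<phi>: "Re (\<phi> x) = g x" for x
    unfolding \<phi>_def by simp
  have \<phi>_add: "\<phi> (x + y) = \<phi> x + \<phi> y" for x y
    unfolding \<phi>_def by (simp add: linear_add[OF g] scaleC_add_right complex_eq_iff)
  have \<phi>_scaleR: "\<phi> (r *\<^sub>R x) = of_real r * \<phi> x" for r x
    unfolding \<phi>_def by (simp add: linear_scale[OF g] scaleC_scaleR complex_eq_iff)
  have \<phi>_ii: "\<phi> (scaleC \<i> x) = \<i> * \<phi> x" for x
    using linear_neg[OF g, of x] unfolding \<phi>_def by (simp add: scaleC_ii complex_eq_iff)
  have \<phi>_scaleC: "\<phi> (scaleC c x) = c * \<phi> x" for c x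
  proof -
    have c: "c = complex_of_real (Re c) + \<i> * complex_of_real (Im c)"
      by (simp add: complex_eq_iff)
    have "scaleC c x = Re c *\<^sub>R x + scaleC \<i> (Im c *\<^sub>R x)"
      by (subst c, simp only: scaleC_add_left scaleC_of_real flip: scaleC_scaleC)
    then have "\<phi> (scaleC c x) = of_real (Re c) * \<phi> x + \<i> * (of_real (Im c) * \<phi> x)"
      by (simp add: \<phi>_add \<phi>_scaleR \<phi>_ii)
    also have "\<dots> = c * \<phi> x"
      by (subst (3) c) (simp add: algebra_simps)
    finally show ?thesis .
  qed
  have \<phi>_le: "cmod (\<phi> x) \<le> norm x" for x
  proof (cases "\<phi> x = 0")
    case False
    define c where "c = cnj (\<phi> x) / complex_of_real (cmod (\<phi> x))"
    \<comment> \<open>rotate \<open>x\<close> so that \<open>\<phi>\<close> becomes real and positive on it\<close>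
    have "c * \<phi> x = complex_of_real (cmod (\<phi> x))"
      using False complex_norm_square[of "\<phi> x"]
      unfolding c_def by (simp add: field_simps power2_eq_square mult.commute)
    then have "cmod (\<phi> x) = g (scaleC c x)"
      by (simp flip: Re_\<phi> add: \<phi>_scaleC)
    also have "\<dots> \<le> norm (scaleC c x)" by (rule g_le)
    also have "\<dots> = norm x"
      using False unfolding c_def by (simp add: norm_scaleC norm_divide)
    finally show ?thesis .
  qed simp
  have "\<phi> v = complex_of_real (norm v)"
  proof -
    have "(cmod (\<phi> v))\<^sup>2 \<le> (Re (\<phi> v))\<^sup>2"
      using \<phi>_le[of v] by (simp add: Re_\<phi> g_v power_mono)
    then have "Im (\<phi> v) = 0" by (simp add: cmod_power2)
    then show ?thesis by (simp add: complex_eq_iff Re_\<phi> g_v)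
  qed
  moreover have "bounded_linear \<phi>"
  proof (rule bounded_linear_intro[where K = 1])
    show "\<phi> (r *\<^sub>R x) = r *\<^sub>R \<phi> x" for r x
      by (simp add: \<phi>_scaleR scaleR_conv_of_real)
  qed (simp_all add: \<phi>_add \<phi>_le)
  ultimately show ?thesis
    using that \<phi>_scaleC \<phi>_le by blast
qed

section \<open>Analytic functions on the disc\<close>

lemma analytic_disc_continuous_on:
  assumes "analytic_disc f"
  shows "continuous_on (ball 0 1) f"
proof -
  have "isCont f z" if z: "z \<in> ball 0 1" for z
  proof -
    obtain v where lim: "((\<lambda>w. scaleC (inverse (w - z)) (f w - f z)) \<longlongrightarrow> v) (at z)"
      using assms z unfolding analytic_disc_def by blast
    have bounded: "eventually (\<lambda>w. norm (scaleC (inverse (w - z)) (f w - f z)) < norm v + 1) (at z)"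
      using tendsto_norm[OF lim] by (rule order_tendstoD) simp
    have "((\<lambda>w. f w - f z) \<longlongrightarrow> 0) (at z)"
    proof (rule Lim_null_comparison)
      show "eventually (\<lambda>w. norm (f w - f z) \<le> cmod (w - z) * (norm v + 1)) (at z)"
        using bounded eventually_neq_at_within[of z z UNIV]
      proof eventually_elim
        case (elim w)
        then have "f w - f z = scaleC (w - z) (scaleC (inverse (w - z)) (f w - f z))"
          by (simp add: scaleC_scaleC scaleC_one)
        then have "norm (f w - f z) = cmod (w - z) * norm (scaleC (inverse (w - z)) (f w - f z))"
          by (metis norm_scaleC)
        with elim show ?case by (simp add: mult_left_mono)
      qed
      show "((\<lambda>w. cmod (w - z) * (norm v + 1)) \<longlongrightarrow> 0) (at z)"
        by (auto intro!: tendsto_eq_intros)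
    qed
    then show "isCont f z" by (simp add: isCont_def LIM_zero_iff)
  qed
  then show ?thesis by (simp add: continuous_at_imp_continuous_on)
qed

lemma analytic_disc_holomorphic_functional:
  fixes f :: "complex \<Rightarrow> 'a::complex_banach"
  assumes f: "analytic_disc f" and \<phi>: "bounded_linear \<phi>"
    and \<phi>_scaleC: "\<And>c x. \<phi> (scaleC c x) = c * \<phi> x"
  shows "(\<lambda>z. \<phi> (f z)) holomorphic_on ball 0 1"
proof (rule holomorphic_onI)
  fix z :: complex assume "z \<in> ball 0 1"
  then obtain v where "((\<lambda>w. scaleC (inverse (w - z)) (f w - f z)) \<longlongrightarrow> v) (at z)"
    using f unfolding analytic_disc_def by blast
  from bounded_linear.tendsto[OF \<phi> this]
  have "((\<lambda>w. (\<phi> (f w) - \<phi> (f z)) / (w - z)) \<longlongrightarrow> \<phi> v) (at z)"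
    by (simp add: \<phi>_scaleC linear_diff[OF bounded_linear.linear[OF \<phi>]] divide_inverse mult.commute)
  then have "((\<lambda>w. \<phi> (f w)) has_field_derivative \<phi> v) (at z)"
    by (simp add: has_field_derivative_iff)
  then show "(\<lambda>w. \<phi> (f w)) field_differentiable at z within ball 0 1"
    using field_differentiable_at_within field_differentiable_def by blast
qed

section \<open>Distances on the circle\<close>

lemma circdist_eq: "circdist x y = \<bar>(x - y) - of_int (round (x - y))\<bar>"
  unfolding circdist_def
proof (rule antisym)
  show "(INF k\<in>\<int>. \<bar>x - y - k\<bar>) \<le> \<bar>x - y - of_int (round (x - y))\<bar>"
    by (rule cINF_lower) (auto intro: bdd_belowI[of _ 0])
  show "\<bar>x - y - of_int (round (x - y))\<bar> \<le> (INF k\<in>\<int>. \<bar>x - y - k\<bar>)"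
    by (rule cINF_greatest) (auto elim!: Ints_cases simp: round_diff_minimal)
qed

lemma circdist_nonneg: "0 \<le> circdist x y"
  by (simp add: circdist_eq)

lemma circdist_le_half: "circdist x y \<le> 1/2"
  using of_int_round_abs_le[of "x - y"] by (simp add: circdist_eq abs_minus_commute)

lemma zeta_circle_point:
  assumes "cmod z = R"
  obtains t where "t \<in> {0..<1}" "z = complex_of_real R * zeta t"
proof (cases "z = 0")
  case True
  then show ?thesis using assms that[of 0] by simp
next
  case False
  have z: "z = complex_of_real R * cis (Arg z)"
    using assms False by (metis cis_Arg complex_of_real_def mult.commute sgn_eq rcis_def rcis_cmod_Arg)
  have Arg: "- pi < Arg z" "Arg z \<le> pi" using Arg_bounded by auto
  show ?thesis
  proof (cases "Arg z \<ge> 0")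
    case True
    then show ?thesis
      using Arg z by (intro that[of "Arg z / (2*pi)"]) (simp_all add: zeta_def field_simps)
  next
    case False
    have "cis (2*pi*(Arg z / (2*pi) + 1)) = cis (Arg z)"
      by (simp add: distrib_left cis.ctr)
    then show ?thesis
      using Arg False z by (intro that[of "Arg z / (2*pi) + 1"]) (simp_all add: zeta_def field_simps)
  qed
qed

lemma norm_one_minus_cis_sq:
  "(cmod (1 - complex_of_real R * cis \<theta>))\<^sup>2 = (1 - R)\<^sup>2 + 4 * R * (sin (\<theta>/2))\<^sup>2"
proof -
  have "(cmod (1 - complex_of_real R * cis \<theta>))\<^sup>2 = (1 - R * cos \<theta>)\<^sup>2 + (R * sin \<theta>)\<^sup>2"
    by (simp add: cmod_power2)
  also have "\<dots> = 1 - 2 * R * cos \<theta> + R\<^sup>2 * ((sin \<theta>)\<^sup>2 + (cos \<theta>)\<^sup>2)"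
    by algebra
  also have "\<dots> = 1 - 2 * R * cos \<theta> + R\<^sup>2"
    by simp
  also have "cos \<theta> = 1 - 2 * (sin (\<theta>/2))\<^sup>2"
    using cos_double_sin[of "\<theta>/2"] by simp
  finally show ?thesis by (simp add: power2_eq_square algebra_simps)
qed

lemma sin_ge_quarter:
  assumes "0 \<le> w" "w \<le> pi/2"
  shows "w/4 \<le> sin w"
proof (cases "w \<le> pi/3")
  case True
  \<comment> \<open>\<open>sin u - u/2\<close> is nondecreasing on \<open>[0, \<pi>/3]\<close>, where \<open>cos u \<ge> 1/2\<close>\<close>
  have "(\<lambda>u. sin u - u/2) 0 \<le> (\<lambda>u. sin u - u/2) w"
  proof (rule DERIV_nonneg_imp_nondecreasing[OF assms(1)])
    fix u assume "0 \<le> u" "u \<le> w"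
    then have "cos (pi/3) \<le> cos u" using True by (intro cos_monotone_0_pi_le) auto
    then show "\<exists>y. ((\<lambda>u. sin u - u/2) has_real_derivative y) (at u) \<and> 0 \<le> y"
      by (auto intro!: derivative_eq_intros simp: cos_60)
  qed
  then show ?thesis using assms by simp
next
  case False
  have "sin (pi/3) \<le> sin w" using False assms by (intro sin_monotone_2pi_le) auto
  then have "sqrt 3 / 2 \<le> sin w" by (simp add: sin_60)
  moreover have "1 \<le> sqrt 3" by simp
  moreover have "w < 2" using assms pi_less_4 by linarith
  ultimately show ?thesis by linarith
qed

lemma norm_one_minus_cis_le:
  assumes "0 \<le> r" "r \<le> 1"
  shows "cmod (1 - complex_of_real r * cis (2*pi*u)) \<le> (1 - r) + 2*pi*\<bar>u\<bar>"
proof (rule power2_le_imp_le)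
  have "r * (sin (pi*u))\<^sup>2 \<le> (pi*u)\<^sup>2"
    using mult_left_le_one_le[of "(sin (pi*u))\<^sup>2" r] assms abs_sin_x_le_abs_x[of "pi*u"]
      power_mono[of "\<bar>sin (pi*u)\<bar>" "\<bar>pi*u\<bar>" 2]
    by simp
  then have "(cmod (1 - complex_of_real r * cis (2*pi*u)))\<^sup>2 \<le> (1 - r)\<^sup>2 + (2*pi*\<bar>u\<bar>)\<^sup>2"
    unfolding norm_one_minus_cis_sq by (simp add: power_mult_distrib)
  also have "\<dots> \<le> ((1 - r) + 2*pi*\<bar>u\<bar>)\<^sup>2"
    using assms by (simp add: power2_sum)
  finally show "(cmod (1 - complex_of_real r * cis (2*pi*u)))\<^sup>2 \<le> ((1 - r) + 2*pi*\<bar>u\<bar>)\<^sup>2" .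
qed (use assms in simp)

lemma norm_one_minus_cis_ge:
  assumes "\<bar>u\<bar> \<le> 1/2" "0 \<le> R" "R < 1"
  shows "((1 - R) + \<bar>u\<bar>)/3 \<le> cmod (1 - complex_of_real R * cis (2*pi*u))"
proof (rule power2_le_imp_le)
  have "\<bar>u\<bar>/2 \<le> pi*\<bar>u\<bar>/4" using pi_gt3 by (simp add: mult_right_mono)
  also have "\<dots> \<le> sin (pi*\<bar>u\<bar>)" using assms by (intro sin_ge_quarter) (auto simp: mult_le_cancel_left1)
  also have "\<dots> = \<bar>sin (pi*u)\<bar>"
  proof -
    have "0 \<le> sin (pi*\<bar>u\<bar>)" using assms by (intro sin_ge_zero) (auto simp: mult_left_le)
    moreover have "sin (pi*\<bar>u\<bar>) = sin (pi*u) \<or> sin (pi*\<bar>u\<bar>) = - sin (pi*u)"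
      by (cases "u \<ge> 0") auto
    ultimately show ?thesis by linarith
  qed
  finally have u_sin: "u\<^sup>2 \<le> 4 * (sin (pi*u))\<^sup>2"
    using power_mono[of "\<bar>u\<bar>/2" "\<bar>sin (pi*u)\<bar>" 2] by (simp add: power_divide)
  have "(1 - R)\<^sup>2 + R * u\<^sup>2 \<le> (cmod (1 - complex_of_real R * cis (2*pi*u)))\<^sup>2"
    unfolding norm_one_minus_cis_sq using mult_left_mono[OF u_sin, of R] assms
    by (simp add: mult.left_commute)
  moreover have "(((1 - R) + \<bar>u\<bar>)/3)\<^sup>2 \<le> (1 - R)\<^sup>2 + R * u\<^sup>2"
  proof (cases "R \<ge> 1/2")
    case True
    define A where "A = 1 - R"
    have "((A + \<bar>u\<bar>)/3)\<^sup>2 \<le> 2/9 * A\<^sup>2 + 2/9 * u\<^sup>2"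
      using sum_squares_ge_zero[of "A - \<bar>u\<bar>" 0] by (simp add: power2_eq_square field_simps)
    also have "\<dots> \<le> A\<^sup>2 + R * u\<^sup>2"
      using mult_right_mono[OF True zero_le_power2[of u]] zero_le_power2[of A] zero_le_power2[of u]
      by linarith
    finally show ?thesis unfolding A_def .
  next
    case False
    then have "(((1 - R) + \<bar>u\<bar>)/3)\<^sup>2 \<le> (1 - R)\<^sup>2"
      using assms by (intro power_mono) auto
    also have "\<dots> \<le> (1 - R)\<^sup>2 + R * u\<^sup>2"
      using assms by simp
    finally show ?thesis .
  qed
  ultimately show "(((1 - R) + \<bar>u\<bar>)/3)\<^sup>2 \<le> (cmod (1 - complex_of_real R * cis (2*pi*u)))\<^sup>2"
    by linarith
qed simp

lemma norm_one_minus_cnj_zeta: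
  "cmod (1 - cnj (zeta x) * (complex_of_real R * zeta t)) =
   cmod (1 - complex_of_real R * cis (2*pi*((x - t) - of_int (round (x - t)))))"
proof -
  have "cis (2*pi*((x - t) - of_int (round (x - t)))) = cis (2*pi*(x - t)) * cis (2 * pi * of_int (- round (x - t)))"
    by (simp add: cis_mult algebra_simps)
  also have "cis (2 * pi * of_int (- round (x - t))) = 1"
    by (intro cis_multiple_2pi) auto
  finally have "cis (2*pi*((x - t) - of_int (round (x - t)))) = cis (2*pi*(x - t))"
    by simp
  moreover have "1 - cnj (zeta x) * (complex_of_real R * zeta t) = cnj (1 - complex_of_real R * cis (2*pi*(x - t)))"
    by (simp add: zeta_def cis_cnj cis_mult algebra_simps)
  ultimately show ?thesis by (metis complex_mod_cnj)
qed

lemma norm_one_minus_cnj_zeta_ge: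
  assumes "0 \<le> R" "R < 1"
  shows "(1 - R)/3 * (1 + circdist x t / (1 - R)) \<le> cmod (1 - cnj (zeta x) * (complex_of_real R * zeta t))"
proof -
  have "(1 - R)/3 * (1 + circdist x t / (1 - R)) = ((1 - R) + circdist x t)/3"
    using assms by (simp add: field_simps)
  also have "\<dots> \<le> cmod (1 - complex_of_real R * cis (2*pi*((x - t) - of_int (round (x - t)))))"
    unfolding circdist_eq
    by (rule norm_one_minus_cis_ge) (use assms circdist_le_half[of x t] in \<open>simp_all add: circdist_eq\<close>)
  finally show ?thesis by (simp only: norm_one_minus_cnj_zeta)
qed

lemma norm_one_minus_cnj_zeta_le:
  assumes "0 \<le> r" "r < 1"
  shows "cmod (1 - cnj (zeta x) * (complex_of_real r * zeta y)) \<le> 2*pi*(1 - r) * (1 + circdist x y / (1 - r))"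
proof -
  have "cmod (1 - cnj (zeta x) * (complex_of_real r * zeta y)) \<le> (1 - r) + 2*pi*circdist x y"
    using norm_one_minus_cis_le[of r "(x - y) - of_int (round (x - y))"] assms
    by (simp add: norm_one_minus_cnj_zeta circdist_eq)
  also have "\<dots> \<le> 2*pi*(1 - r) + 2*pi*circdist x y"
    using assms pi_gt3 by simp
  also have "\<dots> = 2*pi*(1 - r) * (1 + circdist x y / (1 - r))"
    using assms by (simp add: field_simps)
  finally show ?thesis .
qed

section \<open>The Peetre maximal function\<close>

lemma weighted_norm_le_peetre:
  assumes f: "analytic_disc f" and R: "0 \<le> R" "R < 1" and a: "0 \<le> a" and t: "t \<in> {0..<1}"
  shows "norm (f (complex_of_real R * zeta t)) * (1 + circdist x t / (1 - R)) powr (- a) \<le> peetre f R a x"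
  unfolding peetre_def
proof (rule cSUP_upper[OF t])
  have "compact (f ` cball 0 R)"
    using R by (intro compact_continuous_image continuous_on_subset[OF analytic_disc_continuous_on[OF f]]) auto
  then obtain B where B: "\<And>z. z \<in> cball 0 R \<Longrightarrow> norm (f z) \<le> B"
    by (meson bounded_iff compact_imp_bounded imageI)
  have "norm (f (complex_of_real R * zeta s)) * (1 + circdist x s / (1 - R)) powr (- a) \<le> B" for s
  proof -
    have "(1 + circdist x s / (1 - R)) powr (- a) \<le> 1"
      using R a circdist_nonneg[of x s] by (simp add: powr_minus inverse_le_1_iff ge_one_powr_ge_zero)
    moreover have "norm (f (complex_of_real R * zeta s)) \<le> B"
      using R by (intro B) (simp add: zeta_def norm_mult)
    ultimately show ?thesis
      by (meson mult_left_le norm_ge_zero order_trans powr_ge_zero)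
  qed
  then show "bdd_above ((\<lambda>s. norm (f (complex_of_real R * zeta s)) * (1 + circdist x s / (1 - R)) powr (- a)) ` {0..<1})"
    by (rule bdd_aboveI2)
qed

lemma peetre_nonneg:
  assumes "analytic_disc f" "0 \<le> R" "R < 1" "0 \<le> a"
  shows "0 \<le> peetre f R a x"
  by (rule order_trans[OF mult_nonneg_nonneg[OF norm_ge_zero powr_ge_zero] weighted_norm_le_peetre[OF assms, of 0]])
    simp

lemma holomorphic_weighted_max_modulus:
  fixes h :: "complex \<Rightarrow> complex"
  assumes h: "h holomorphic_on ball 0 1" and R: "0 \<le> R" "R < 1" and a: "0 \<le> a"
    and B: "\<And>t. t \<in> {0..<1} \<Longrightarrow> cmod (h (complex_of_real R * zeta t)) * (1 + circdist x t / (1 - R)) powr (- a) \<le> B"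
    and p: "cmod p \<le> R"
  shows "cmod (h p) * cmod (1 - cnj (zeta x) * p) powr (- a) \<le> (3/(1 - R)) powr a * B"
proof -
  define w where "w z = 1 - cnj (zeta x) * z" for z
  have Re_w: "0 < Re (w z)" if "z \<in> ball 0 1" for z
    using complex_Re_le_cmod[of "cnj (zeta x) * z"] that
    by (simp add: w_def norm_mult zeta_def)
  have w_nonpos_Reals: "w z \<notin> \<real>\<^sub>\<le>\<^sub>0" if "z \<in> ball 0 1" for z
    using Re_w[OF that] by (auto simp: complex_nonpos_Reals_iff)
  define G where "G z = h z * w z powr (- complex_of_real a)" for z
  have G_hol: "G holomorphic_on ball 0 1"
    unfolding G_def w_def using w_nonpos_Reals[unfolded w_def]
    by (intro holomorphic_intros h) auto
  have norm_G: "cmod (G z) = cmod (h z) * cmod (w z) powr (- a)" for z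
    by (simp add: G_def norm_mult norm_powr_real_powr')
  have "cmod (G z) \<le> (3/(1 - R)) powr a * B" if z: "z \<in> frontier (cball 0 R)" for z
  proof -
    have "cmod z = R" using z R by simp
    then obtain t where t: "t \<in> {0..<1}" "z = complex_of_real R * zeta t"
      by (rule zeta_circle_point)
    define q where "q = 1 + circdist x t / (1 - R)"
    have q: "0 < q" using R circdist_nonneg[of x t] by (simp add: q_def add_pos_nonneg)
    have "cmod (w z) powr (- a) \<le> ((1 - R)/3 * q) powr (- a)"
      using norm_one_minus_cnj_zeta_ge[OF R, of x t] q R a
      by (intro powr_mono2') (simp_all add: w_def t(2) q_def)
    also have "\<dots> = (3/(1 - R)) powr a * q powr (- a)"
      using q R by (simp add: powr_mult powr_minus_divide powr_divide)
    finally have "cmod (G z) \<le> (3/(1 - R)) powr a * (cmod (h z) * q powr (- a))"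
      unfolding norm_G by (simp add: mult_left_mono mult.left_commute)
    also have "\<dots> \<le> (3/(1 - R)) powr a * B"
      using B[OF t(1)] by (simp add: t(2) q_def mult_left_mono)
    finally show ?thesis .
  qed
  moreover have disc: "cball 0 R \<subseteq> ball 0 1" using R by auto
  then have "G holomorphic_on interior (cball 0 R)"
    using interior_subset by (blast intro: holomorphic_on_subset[OF G_hol])
  moreover have "continuous_on (closure (cball 0 R)) G"
    using disc by (auto intro: continuous_on_subset[OF holomorphic_on_imp_continuous_on[OF G_hol]])
  moreover have "p \<in> cball 0 R" using p by simp
  ultimately have "cmod (G p) \<le> (3/(1 - R)) powr a * B"
    using maximum_modulus_frontier[where S = "cball 0 R"] by blast
  then show ?thesis by (simp add: norm_G w_def)
qed

lemma holomorphic_weighted_bound_inwards: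
  fixes h :: "complex \<Rightarrow> complex"
  assumes h: "h holomorphic_on ball 0 1" and r: "0 \<le> r" "r \<le> R" and R: "R < 1" and a: "0 \<le> a"
    and B: "\<And>t. t \<in> {0..<1} \<Longrightarrow> cmod (h (complex_of_real R * zeta t)) * (1 + circdist x t / (1 - R)) powr (- a) \<le> B"
  shows "cmod (h (complex_of_real r * zeta y)) * (1 + circdist x y / (1 - r)) powr (- a)
           \<le> (6*pi*(1 - r)/(1 - R)) powr a * B"
proof -
  define p where "p = complex_of_real r * zeta y"
  define d where "d = cmod (1 - cnj (zeta x) * p)"
  define q where "q = 1 + circdist x y / (1 - r)"
  have B_nonneg: "0 \<le> B"
    by (rule order_trans[OF mult_nonneg_nonneg[OF norm_ge_zero powr_ge_zero] B[of 0]]) simp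
  have q: "0 < q" using r R circdist_nonneg[of x y] by (simp add: q_def add_pos_nonneg)
  have "0 < Re (1 - cnj (zeta x) * p)"
    using complex_Re_le_cmod[of "cnj (zeta x) * p"] r R by (simp add: p_def norm_mult zeta_def)
  then have d: "0 < d"
    unfolding d_def using complex_Re_le_cmod less_le_trans by blast
  have "cmod (h p) * q powr (- a) = cmod (h p) * d powr (- a) * (d / q) powr a"
    using d q by (simp add: powr_divide powr_minus field_simps)
  also have "\<dots> \<le> (3/(1 - R)) powr a * B * (2*pi*(1 - r)) powr a"
  proof (rule mult_mono)
    show "cmod (h p) * d powr (- a) \<le> (3/(1 - R)) powr a * B"
      unfolding d_def using r R by (intro holomorphic_weighted_max_modulus[OF h _ R a B])
        (simp_all add: p_def norm_mult zeta_def)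
    show "(d / q) powr a \<le> (2*pi*(1 - r)) powr a"
      using norm_one_minus_cnj_zeta_le[of r x y] r R q a
      by (intro powr_mono2) (simp_all add: d_def p_def q_def pos_divide_le_eq mult.commute)
  qed (use B_nonneg in simp_all)
  also have "\<dots> = (6*pi*(1 - r)/(1 - R)) powr a * B"
    using r R by (simp add: powr_mult[symmetric] mult.commute mult.left_commute)
  finally show ?thesis by (simp add: p_def q_def)
qed

lemma peetre_le_larger_radius:
  fixes f :: "complex \<Rightarrow> 'a::complex_banach"
  assumes f: "analytic_disc f" and r: "0 \<le> r" "r \<le> R" and R: "R < 1" and a: "0 \<le> a"
  shows "peetre f r a x \<le> (6*pi*(1 - r)/(1 - R)) powr a * peetre f R a x"
  unfolding peetre_def[of f r]
proof (rule cSUP_least)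
  fix y
  define p where "p = complex_of_real r * zeta y"
  obtain \<phi> :: "'a \<Rightarrow> complex" where \<phi>: "bounded_linear \<phi>" "\<And>c x. \<phi> (scaleC c x) = c * \<phi> x"
    and \<phi>_le: "\<And>x. cmod (\<phi> x) \<le> norm x" and \<phi>_p: "\<phi> (f p) = complex_of_real (norm (f p))"
    using complex_norming_functional by blast
  have "cmod (\<phi> (f (complex_of_real R * zeta t))) * (1 + circdist x t / (1 - R)) powr (- a)
          \<le> peetre f R a x" if "t \<in> {0..<1}" for t
    using weighted_norm_le_peetre[OF f _ R a that, of x] r \<phi>_le
    by (meson mult_right_mono order_trans powr_ge_zero)
  then have "cmod (\<phi> (f p)) * (1 + circdist x y / (1 - r)) powr (- a)
          \<le> (6*pi*(1 - r)/(1 - R)) powr a * peetre f R a x"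
    unfolding p_def
    by (rule holomorphic_weighted_bound_inwards[OF analytic_disc_holomorphic_functional[OF f \<phi>] r R a])
  then show "norm (f (complex_of_real r * zeta y)) * (1 + circdist x y / (1 - r)) powr (- a)
          \<le> (6*pi*(1 - r)/(1 - R)) powr a * peetre f R a x"
    unfolding \<phi>_p by (simp add: p_def)
qed simp

theorem lemma14:
  fixes a :: real and r r' :: "nat \<Rightarrow> real"
  assumes "a > 0"
    and "\<And>l. 0 \<le> r l \<and> r l < 1" and "\<And>l. 0 \<le> r' l \<and> r' l < 1"
    and "\<exists>c C. 0 < c \<and> (\<forall>l. c * 2 powr (- real l) \<le> 1 - r l \<and> 1 - r l \<le> C * 2 powr (- real l))"
    and "\<exists>c C. 0 < c \<and> (\<forall>l. c * 2 powr (- real l) \<le> 1 - r' l \<and> 1 - r' l \<le> C * 2 powr (- real l))"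
    and "\<exists>c C. 0 < c \<and> (\<forall>l. c * 2 powr (- real l) \<le> r' l - r l \<and> r' l - r l \<le> C * 2 powr (- real l))"
    and "\<exists>c C. 0 < c \<and> (\<forall>l. c * 2 powr (- real l) \<le> 1 - r l / r' l \<and> 1 - r l / r' l \<le> C * 2 powr (- real l))"
  shows "\<exists>K. \<forall>(f :: complex \<Rightarrow> 'X::complex_banach). analytic_disc f \<longrightarrow>
           (\<forall>l x. peetre f (r l) a x \<le> K * peetre f (r' l) a x)"
proof -
  obtain C where C: "\<And>l. 1 - r l \<le> C * 2 powr (- real l)"
    using assms(4) by blast
  obtain c' where c': "0 < c'" "\<And>l. c' * 2 powr (- real l) \<le> 1 - r' l"
    using assms(5) by blast
  obtain c'' where "0 < c''" "\<And>l. c'' * 2 powr (- real l) \<le> r' l - r l"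
    using assms(6) by blast
  then have r_le: "r l \<le> r' l" for l
    by (smt (verit) mult_pos_pos powr_gt_zero)
  have ratio: "6*pi*(1 - r l)/(1 - r' l) \<le> 6*pi*(C/c')" for l
  proof -
    have "(1 - r l)/(1 - r' l) \<le> (C * 2 powr (- real l)) / (c' * 2 powr (- real l))"
      using C[of l] c' assms(2,3)[of l] by (intro frac_le) (auto intro: order_trans[OF _ C[of l]])
    then have "6*pi*((1 - r l)/(1 - r' l)) \<le> 6*pi*(C/c')"
      by (intro mult_left_mono) simp_all
    then show ?thesis by simp
  qed
  show ?thesis
  proof (intro exI[of _ "(6*pi*(C/c')) powr a"] allI impI)
    fix f :: "complex \<Rightarrow> 'X" and l x
    assume f: "analytic_disc f"
    have a: "0 \<le> a" using assms(1) by simp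
    have "peetre f (r l) a x \<le> (6*pi*(1 - r l)/(1 - r' l)) powr a * peetre f (r' l) a x"
      using assms(2,3)[of l] r_le by (intro peetre_le_larger_radius f a) auto
    also have "\<dots> \<le> (6*pi*(C/c')) powr a * peetre f (r' l) a x"
      using assms(2,3)[of l] a ratio
      by (intro mult_right_mono powr_mono2 peetre_nonneg[OF f]) auto
    finally show "peetre f (r l) a x \<le> (6*pi*(C/c')) powr a * peetre f (r' l) a x" .
  qed
qed

end
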